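(* Let $(q_n)$ be the Fibonacci Quilt sequence and let $m$ be a positive integer. If $m=c_1q_1+c_2q_2+\cdots+c_nq_n$ with nonnegative integers $c_i$ is any decomposition $\mathcal D(m)$ of $m$ as a sum of Fibonacci Quilt numbers (not necessarily FQ-legal, repetitions allowed), with number of summands $c_1+\cdots+c_n$, then the number of summands of the Greedy-6 decomposition $\mathcal G(m)$ is at most $c_1+c_2+\cdots+c_n$.
   Context: Given an increasing sequence of positive integers $(q_i)_{i\ge1}$, an FQ-legal decomposition of an integer $m\ge0$ is an expression $m=q_{\ell_1}+q_{\ell_2}+\cdots+q_{\ell_t}$ ($t\ge0$, the empty sum representing $0$) with distinct indices $\ell_1>\ell_2>\cdots>\ell_t$ such that $|\ell_i-\ell_j|\notin\{1,3,4\}$ for all $i,j$, and $\{1,3\}\not\subset\{\ell_1,\dots,\ell_t\}$. The Fibonacci Quilt sequence is the increasing sequence of positive integers $(q_i)_{i\ge1}$ in which each $q_i$ is the smallest positive integer having no FQ-legal decomposition using only $q_1,\dots,q_{i-1}$. Its first terms are $1,2,3,4,5,7,9,12,16,21,28,37,49,\dots$. The Greedy-6 decomposition $\mathcal G(m)$ of a positive integer $m$ is defined recursively: if $m=q_n$ for some $n$, then $\mathcal G(m)=q_n$; if $m=6$, then $\mathcal G(6)=q_4+q_2$; otherwise ($m\ge q_6=7$ and $m$ not a term of the sequence) let $\ell_1$ be such that $q_{\ell_1}<m<q_{\ell_1+1}$, set $x=m-q_{\ell_1}>0$, and $\mathcal G(m)=q_{\ell_1}+\mathcal G(x)$. *)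

theory Defs
  imports Main
begin

definition FQ_legal :: "nat set \<Rightarrow> bool" where
  "FQ_legal S \<longleftrightarrow> finite S \<and> 0 \<notin> S \<and>
     (\<forall>i\<in>S. \<forall>j\<in>S. (if i \<le> j then j - i else i - j) \<notin> {1, 3, 4}) \<and>
     \<not> ({1, 3} \<subseteq> S)"

definition has_FQ_legal :: "nat list \<Rightarrow> nat \<Rightarrow> bool" where
  "has_FQ_legal l x \<longleftrightarrow>
     (\<exists>S. S \<subseteq> {1..length l} \<and> FQ_legal S \<and> (\<Sum>i\<in>S. l ! (i - 1)) = x)"

primrec FQ_prefix :: "nat \<Rightarrow> nat list" where
  "FQ_prefix 0 = []"
| "FQ_prefix (Suc n) = FQ_prefix n @ [LEAST x::nat. 0 < x \<and> \<not> has_FQ_legal (FQ_prefix n) x]"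

text \<open>The Fibonacci Quilt sequence, 1-indexed: fq 1 = 1, fq 2 = 2, ...\<close>
definition fq :: "nat \<Rightarrow> nat" where
  "fq i = FQ_prefix i ! (i - 1)"

text \<open>Greedy-6 decomposition, as a relation between m and the list of its summands
  (largest first), following the recursive definition clause by clause.\<close>
inductive greedy6 :: "nat \<Rightarrow> nat list \<Rightarrow> bool" where
  is_term: "n \<ge> 1 \<Longrightarrow> greedy6 (fq n) [fq n]"
| six: "greedy6 6 [fq 4, fq 2]"
| step: "\<lbrakk> m \<noteq> 6; \<forall>n\<ge>1. m \<noteq> fq n; l \<ge> 1; fq l < m; m < fq (l + 1);
           greedy6 (m - fq l) L \<rbrakk> \<Longrightarrow> greedy6 m (fq l # L)"

end

theory Submission
  imports Defs "HOL-Library.Multiset"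
begin

text \<open>
  The Fibonacci Quilt numbers are q_n = n for n \<le> 5 and q_n = q_{n-2} + q_{n-3}
  afterwards: q_{n+1} has no FQ-legal decomposition over q_1, \<dots>, q_n (a case analysis on
  its two largest possible summands, bounding sums of non-adjacent terms by q_{j+3}), whereas
  every smaller positive integer has one (greedily).

  For the optimality of Greedy-6, represent an arbitrary decomposition by the multiset of its
  indices. If all parts are at most k but the value is at least q_{k+1}, the decomposition can be
  rewritten, without increasing the number of summands, into one with a part above k: use
  q_k + q_j = q_a + q_b with a > k whenever k - 4 \<le> j \<le> k (except 5 + 1), the identity
  q_5 + q_1 + q_1 = q_6, or induction on k. Hence some decomposition of m with no more
  summands contains the greedy term q_l, and induction on m concludes.
\<close>

fun quilt :: "nat \<Rightarrow> nat" where
  "quilt n = (if n \<le> 5 then n else quilt (n - 2) + quilt (n - 3))"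

declare quilt.simps[simp del]

lemma quilt_small: "n \<le> 5 \<Longrightarrow> quilt n = n"
  by (simp add: quilt.simps)

lemma quilt_values[simp]:
  "quilt 0 = 0" "quilt 1 = 1" "quilt (Suc 0) = 1" "quilt 2 = 2" "quilt 3 = 3" "quilt 4 = 4"
  "quilt 5 = 5" "quilt 6 = 7" "quilt 7 = 9" "quilt 8 = 12" "quilt 9 = 16" "quilt 10 = 21"
  "quilt 11 = 28"
  by (simp_all add: quilt.simps)

lemma quilt_add5: "quilt (n + 5) = quilt (n + 3) + quilt (n + 2)"
proof (cases n)
  case (Suc k)
  then have "quilt (n + 5) = quilt (n + 5 - 2) + quilt (n + 5 - 3)"
    by (subst quilt.simps) simp
  then show ?thesis by (simp add: add.commute)
qed (simp add: quilt_small)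

lemma quilt_add7: "quilt (n + 7) = quilt (n + 6) + quilt (n + 2)"
  using quilt_add5[of n] quilt_add5[of "n + 1"] quilt_add5[of "n + 2"]
  by (simp only: add.assoc numeral_plus_numeral semiring_norm one_plus_numeral)

lemma quilt_pos: "n \<ge> 1 \<Longrightarrow> quilt n > 0"
proof (induction n rule: less_induct)
  case (less n)
  show ?case
  proof (cases "n \<le> 5")
    case True
    then show ?thesis using less.prems by (simp add: quilt_small)
  next
    case False
    then obtain t where "n = t + 5" by (intro that[of "n - 5"]) simp
    then show ?thesis using quilt_add5[of t] less.IH[of "t + 3"] by simp
  qed
qed

lemma quilt_less_Suc: "quilt n < quilt (Suc n)"
proof (cases "n \<le> 5")
  case True
  then show ?thesis by (cases "n = 5") (auto simp: quilt_small)
next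
  case False
  then obtain t where "n = t + 6" by (intro that[of "n - 6"]) simp
  then show ?thesis using quilt_add7[of t] quilt_pos[of "t + 2"] by (simp add: add.commute)
qed

lemma strict_mono_quilt: "strict_mono quilt"
  by (simp add: strict_mono_Suc_iff quilt_less_Suc)

lemma quilt_less_iff[simp]: "quilt i < quilt j \<longleftrightarrow> i < j"
  using strict_mono_quilt by (simp add: strict_mono_less)

lemma quilt_le_iff[simp]: "quilt i \<le> quilt j \<longleftrightarrow> i \<le> j"
  using strict_mono_quilt by (simp add: strict_mono_less_eq)

lemma quilt_eq_iff[simp]: "quilt i = quilt j \<longleftrightarrow> i = j"
  using strict_mono_quilt by (simp add: strict_mono_eq)

lemma quilt_ge: "n \<le> quilt n"
  using strict_mono_quilt by (rule strict_mono_imp_increasing)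

lemma FQ_legal_iff:
  "FQ_legal S \<longleftrightarrow> finite S \<and> 0 \<notin> S \<and> (\<forall>i\<in>S. Suc i \<notin> S \<and> i + 3 \<notin> S \<and> i + 4 \<notin> S)
     \<and> \<not> (1 \<in> S \<and> 3 \<in> S)"
proof -
  have "(\<forall>i\<in>S. \<forall>j\<in>S. (if i \<le> j then j - i else i - j) \<notin> {1, 3, 4}) \<longleftrightarrow>
        (\<forall>i\<in>S. \<forall>d\<in>{1, 3, 4::nat}. i + d \<notin> S)"
  proof (intro iffI ballI)
    fix i d :: nat assume "\<forall>i\<in>S. \<forall>j\<in>S. (if i \<le> j then j - i else i - j) \<notin> {1, 3, 4}"
      and "i \<in> S" "d \<in> {1, 3, 4}"
    then show "i + d \<notin> S" by (metis add_diff_cancel_left' le_add1)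
  next
    fix i j assume "\<forall>i\<in>S. \<forall>d\<in>{1, 3, 4}. i + d \<notin> S" "i \<in> S" "j \<in> S"
    then show "(if i \<le> j then j - i else i - j) \<notin> {1, 3, 4}"
      by (cases "i \<le> j") (metis le_add_diff_inverse nat_le_linear)+
  qed
  then show ?thesis unfolding FQ_legal_def by auto
qed

lemma FQ_legal_gaps:
  assumes "FQ_legal S" and "i \<in> S" and "j \<in> S"
  shows "j \<noteq> i + 1 \<and> j \<noteq> i + 3 \<and> j \<noteq> i + 4"
  using assms unfolding FQ_legal_iff by auto

lemma FQ_legal_subset: "FQ_legal S \<Longrightarrow> T \<subseteq> S \<Longrightarrow> FQ_legal T"
  unfolding FQ_legal_iff by (auto intro: finite_subset)

lemma sum_quilt_less_of_no_adjacent: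
  assumes "S \<subseteq> {1..j}" and "\<forall>i\<in>S. Suc i \<notin> S"
  shows "sum quilt S < quilt (j + 3)"
  using assms
proof (induction j arbitrary: S rule: less_induct)
  case (less j)
  have fin: "finite S" using less.prems(1) finite_subset by blast
  show ?case
  proof (cases "j \<le> 1")
    case True
    then have "sum quilt S \<le> sum quilt {1}"
      using less.prems(1) by (intro sum_mono2) auto
    also have "\<dots> < quilt (j + 3)" by (simp del: quilt_values)
    finally show ?thesis .
  next
    case False
    then obtain t where j: "j = t + 2" by (intro that[of "j - 2"]) simp
    show ?thesis
    proof (cases "j \<in> S")
      case False
      then have "S \<subseteq> {1..j - 1}" using less.prems(1)
        by (auto simp: subset_iff) (metis Suc_pred gr_zeroI le_antisym not_less_eq_eq)
        then have "sum quilt S < quilt (j - 1 + 3)"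
        using less.IH[of "j - 1" S] less.prems(2) j by simp
      also have "\<dots> < quilt (j + 3)" using j by simp
      finally show ?thesis .
    next
      case True
      have "S - {j} \<subseteq> {1..t}"
      proof
        fix x assume "x \<in> S - {j}"
        then have "x \<in> {1..j}" "x \<noteq> j" "Suc x \<noteq> j" using less.prems True by auto
        then show "x \<in> {1..t}" using j by auto
      qed
      then have "sum quilt (S - {j}) < quilt (t + 3)"
        using less.IH[of t] less.prems(2) j by simp
      moreover have "sum quilt S = quilt j + sum quilt (S - {j})"
        using fin True by (simp add: sum.remove)
      moreover have "quilt (j + 3) = quilt (t + 3) + quilt j"
        using quilt_add5[of t] j by (simp add: ac_simps)
      ultimately show ?thesis by linarith
    qed
  qed
qed

lemma quilt_Suc_ne_legal_sum_small:
  assumes "FQ_legal S" and "S \<subseteq> {1..n}" and "n \<le> 5"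
  shows "sum quilt S \<noteq> quilt (Suc n)"
proof -
  have "sum quilt S = sum quilt ({1..5} \<inter> S)"
    using assms(2,3) by (intro arg_cong[of _ _ "sum quilt"]) auto
  also have "\<dots> = (\<Sum>i\<in>{1..5}. if i \<in> S then i else 0)"
    by (simp add: sum.inter_restrict quilt_small)
  also have "\<dots> = (\<Sum>i\<in>{1, 2, 3, 4, 5}. if i \<in> S then i else 0)"
    by (intro sum.cong) auto
  finally have sum_S: "sum quilt S = \<dots>" .
  have quilt_Suc_n: "quilt (Suc n) = (if n \<le> 4 then Suc n else 7)"
    using assms(3) by (cases "n = 5") (auto simp: quilt_small)
  have le_n: "i \<in> S \<Longrightarrow> i \<le> n" for i using assms(2) by auto
  have "i \<in> S \<Longrightarrow> i + 1 \<notin> S \<and> i + 3 \<notin> S \<and> i + 4 \<notin> S" "\<not> (1 \<in> S \<and> 3 \<in> S)" for i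
    using assms(1) unfolding FQ_legal_iff by auto
  from this(1)[of 1] this(1)[of 2] this(1)[of 3] this(1)[of 4] this(2)
  show ?thesis unfolding sum_S quilt_Suc_n
    using le_n[of 1] le_n[of 2] le_n[of 3] le_n[of 4] le_n[of 5]
    by (cases "1 \<in> S"; cases "2 \<in> S"; cases "3 \<in> S"; cases "4 \<in> S"; cases "5 \<in> S";
        simp add: eval_nat_numeral)
qed

lemma quilt_Suc_ne_legal_sum_with_top:
  assumes IH: "\<And>R. FQ_legal R \<Longrightarrow> R \<subseteq> {1..t + 1} \<Longrightarrow> sum quilt R \<noteq> quilt (t + 2)"
    and S: "FQ_legal S" "S \<subseteq> {1..t + 6}" "t + 6 \<in> S"
  shows "sum quilt S \<noteq> quilt (t + 7)"
proof
  assume sum_S: "sum quilt S = quilt (t + 7)"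
  let ?R = "S - {t + 6}"
  have "sum quilt S = quilt (t + 6) + sum quilt ?R"
    using S(1,3) by (simp add: FQ_legal_iff sum.remove)
  then have sum_R: "sum quilt ?R = quilt (t + 2)"
    using sum_S quilt_add7[of t] by simp
  have "t + 4 \<notin> S"
  proof
    assume "t + 4 \<in> S"
    then have "quilt (t + 4) \<le> sum quilt ?R"
      using S(1) by (intro member_le_sum) (auto simp: FQ_legal_iff)
    then show False using sum_R by simp
  qed
  have "?R \<subseteq> {1..t + 1}"
  proof
    fix x assume x: "x \<in> ?R"
    then have "x \<in> {1..t + 6}" "x \<notin> {t + 2, t + 3, t + 4, t + 5, t + 6}"
      using S(2,3) FQ_legal_gaps[OF S(1), of x "t + 6"] \<open>t + 4 \<notin> S\<close> by auto
    then show "x \<in> {1..t + 1}" by auto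
  qed
  then show False
    using IH[of ?R] FQ_legal_subset[OF S(1)] sum_R by blast
qed

lemma quilt_Suc_ne_legal_sum_with_second:
  assumes IH: "\<And>R. FQ_legal R \<Longrightarrow> R \<subseteq> {1..t - 2} \<Longrightarrow> sum quilt R \<noteq> quilt (Suc (t - 2))"
    and S: "FQ_legal S" "S \<subseteq> {1..t + 6}" "t + 6 \<notin> S" "t + 5 \<in> S"
  shows "sum quilt S \<noteq> quilt (t + 7)"
proof
  assume sum_S: "sum quilt S = quilt (t + 7)"
  have fin: "finite S" using S(1) by (simp add: FQ_legal_iff)
  let ?R = "S - {t + 5}"
  have "sum quilt S = quilt (t + 5) + sum quilt ?R"
    using fin S(4) by (simp add: sum.remove)
  then have sum_R: "sum quilt ?R = quilt (t + 4)"
    using sum_S quilt_add5[of "t + 2"] by (simp add: ac_simps)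
  have R_bound: "x \<in> {1..t + 3} - {t + 1, t + 2}" if "x \<in> ?R" for x
  proof -
    have "x \<in> {1..t + 6}" "x \<noteq> t + 6" "x \<noteq> t + 5" using that S(2,3) by auto
    moreover have "t + 5 \<noteq> x + 1 \<and> t + 5 \<noteq> x + 3 \<and> t + 5 \<noteq> x + 4"
      using FQ_legal_gaps[OF S(1), of x "t + 5"] that S(4) by auto
    ultimately show ?thesis by auto
  qed
  show False
  proof (cases "t + 3 \<in> S")
    case False
    have "?R \<subseteq> {1..t}"
    proof
      fix x assume "x \<in> ?R"
      moreover from this False have "x \<noteq> t + 3" by auto
      ultimately show "x \<in> {1..t}" using R_bound[of x] by auto
    qed
    moreover have "\<forall>i\<in>?R. Suc i \<notin> ?R"
      using FQ_legal_gaps[OF S(1)] by auto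
    ultimately have "sum quilt ?R < quilt (t + 3)"
      by (rule sum_quilt_less_of_no_adjacent)
    then show False using sum_R by simp
  next
    case True
    let ?R' = "?R - {t + 3}"
    have "sum quilt ?R = quilt (t + 3) + sum quilt ?R'"
      using fin True by (simp add: sum.remove)
    then have sum_R': "sum quilt ?R' = quilt (t + 4) - quilt (t + 3)"
      using sum_R by simp
    have sub: "?R' \<subseteq> {1..t - 2}"
    proof
      fix x assume x: "x \<in> ?R'"
      then have "x \<in> {1..t + 3} - {t + 1, t + 2, t + 3}" "x + 3 \<noteq> t + 3" "x + 4 \<noteq> t + 3"
        using R_bound FQ_legal_gaps[OF S(1), of x "t + 3"] True by auto
      then show "x \<in> {1..t - 2}" by auto
    qed
    show False
    proof (cases "t \<ge> 3")
      case True
      then have "quilt (t + 4) = quilt (t + 3) + quilt (Suc (t - 2))"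
        using quilt_add7[of "t - 3"] by (simp add: ac_simps)
      then show False using IH[OF FQ_legal_subset[OF S(1)] sub] sum_R' by auto
    next
      case False
      then have "?R' = {}" using sub by auto
      then have "sum quilt ?R' = 0" by (metis sum.empty)
      then show False using sum_R' quilt_less_Suc[of "t + 3"] by simp
    qed
  qed
qed

lemma quilt_Suc_ne_legal_sum:
  assumes "FQ_legal S" and "S \<subseteq> {1..n}"
  shows "sum quilt S \<noteq> quilt (Suc n)"
  using assms
proof (induction n arbitrary: S rule: less_induct)
  case (less n)
  show ?case
  proof (cases "n \<le> 5")
    case True
    then show ?thesis using quilt_Suc_ne_legal_sum_small less.prems by blast
  next
    case False
    then obtain t where n: "n = t + 6" by (intro that[of "n - 6"]) simp
    then have Suc_n: "Suc n = t + 7" by simp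
    have S_sub: "S \<subseteq> {1..t + 6}" using less.prems(2) n by simp
    consider "t + 6 \<in> S" | "t + 6 \<notin> S" "t + 5 \<in> S" | "t + 6 \<notin> S" "t + 5 \<notin> S"
      by blast
    then show ?thesis
      unfolding Suc_n
    proof cases
      case 1
      have "sum quilt R \<noteq> quilt (t + 2)" if "FQ_legal R" "R \<subseteq> {1..t + 1}" for R
        using less.IH[of "t + 1" R] that n by simp
      then show "sum quilt S \<noteq> quilt (t + 7)"
        by (rule quilt_Suc_ne_legal_sum_with_top[OF _ less.prems(1) S_sub 1])
    next
      case 2
      have "sum quilt R \<noteq> quilt (Suc (t - 2))" if "FQ_legal R" "R \<subseteq> {1..t - 2}" for R
        using less.IH[of "t - 2" R] that n by simp
      then show "sum quilt S \<noteq> quilt (t + 7)"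
        by (rule quilt_Suc_ne_legal_sum_with_second[OF _ less.prems(1) S_sub 2])
    next
      case 3
      have "S \<subseteq> {1..t + 4}"
      proof
        fix x assume "x \<in> S"
        moreover from this 3 have "x \<noteq> t + 6" "x \<noteq> t + 5" by auto
        ultimately show "x \<in> {1..t + 4}" using less.prems(2) n by auto
      qed
      moreover have "\<forall>i\<in>S. Suc i \<notin> S"
        using FQ_legal_gaps[OF less.prems(1)] by auto
      ultimately have "sum quilt S < quilt (t + 4 + 3)"
        by (rule sum_quilt_less_of_no_adjacent)
      then show "sum quilt S \<noteq> quilt (t + 7)" by (simp add: add.assoc)
    qed
  qed
qed

lemma quilt_bracket:
  assumes "1 \<le> x"
  obtains k where "1 \<le> k" and "quilt k \<le> x" and "x < quilt (Suc k)"
proof -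
  have "x < quilt (Suc x)" using quilt_ge[of "Suc x"] by simp
  then obtain k where k: "\<not> x < quilt k" "x < quilt (Suc k)"
    using ex_least_nat_less[of "\<lambda>i. x < quilt i" "Suc x"] by auto
  moreover have "k \<noteq> 0" using k assms by (cases k) auto
  ultimately show thesis by (intro that) auto
qed

lemma FQ_legal_insert_far:
  assumes "FQ_legal S" and "S \<subseteq> {1..t + 1}"
  shows "FQ_legal (insert (t + 6) S)"
  using assms unfolding FQ_legal_iff by (auto simp: subset_iff; fastforce)

lemma ex_legal_sum_eq:
  assumes "0 < x" and "x < quilt (Suc n)"
  shows "\<exists>S. S \<subseteq> {1..n} \<and> FQ_legal S \<and> sum quilt S = x"
  using assms
proof (induction x arbitrary: n rule: less_induct)
  case (less x)
  consider "x \<le> 5" | "x = 6" | "7 \<le> x" by linarith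
  then show ?case
  proof cases
    case 1
    then have "quilt x < quilt (Suc n)" using less.prems(2) by (simp add: quilt_small)
    then have "{x} \<subseteq> {1..n}" using less.prems(1) by simp
    moreover have "FQ_legal {x}" using less.prems(1) by (simp add: FQ_legal_iff)
    ultimately show ?thesis using 1 by (intro exI[of _ "{x}"]) (simp add: quilt_small)
  next
    case 2
    then have "quilt 5 < quilt (Suc n)" using less.prems(2) by simp
    then have "{2, 4} \<subseteq> {1..n}" by (simp del: quilt_values)
    moreover have "FQ_legal {2, 4}" by (simp add: FQ_legal_iff)
    ultimately show ?thesis using 2 by (intro exI[of _ "{2, 4}"]) simp
  next
    case 3
    have "1 \<le> x" using less.prems(1) by simp
    then obtain k where k: "1 \<le> k" "quilt k \<le> x" "x < quilt (Suc k)"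
      by (rule quilt_bracket)
    have "quilt 6 < quilt (Suc k)" using k(3) 3 by simp
    then obtain t where t: "k = t + 6" by (intro that[of "k - 6"]) (simp del: quilt_values)
    have "quilt k < quilt (Suc n)" using k(2) less.prems(2) by linarith
    then have "k \<le> n" by simp
    have "quilt (Suc k) = quilt k + quilt (Suc (t + 1))"
      using quilt_add7[of t] t by (simp add: ac_simps)
    then have rest: "x - quilt k < quilt (Suc (t + 1))" using k by simp
    show ?thesis
    proof (cases "x = quilt k")
      case True
      moreover have "FQ_legal {k}" using k(1) by (simp add: FQ_legal_iff)
      ultimately show ?thesis using \<open>k \<le> n\<close> k(1) by (intro exI[of _ "{k}"]) simp
    next
      case False
      have "x - quilt k < x" "0 < x - quilt k" using quilt_pos[OF k(1)] False k(2) by simp_all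
      then obtain S where S: "S \<subseteq> {1..t + 1}" "FQ_legal S" "sum quilt S = x - quilt k"
        using less.IH[OF _ _ rest] by blast
      have "k \<notin> S" using S(1) t by auto
      then have "sum quilt (insert k S) = x"
        using S k(2) by (simp add: FQ_legal_iff)
      moreover have "insert k S \<subseteq> {1..n}" using S(1) \<open>k \<le> n\<close> t by auto
      moreover have "FQ_legal (insert k S)" using FQ_legal_insert_far[OF S(2,1)] t by simp
      ultimately show ?thesis by blast
    qed
  qed
qed

lemma nth_map_quilt_upt: "1 \<le> i \<Longrightarrow> i \<le> n \<Longrightarrow> map quilt [1..<Suc n] ! (i - 1) = quilt i"
  by (simp del: upt_Suc)

lemma has_FQ_legal_quilt_iff:
  "has_FQ_legal (map quilt [1..<Suc n]) x \<longleftrightarrow> (\<exists>S. S \<subseteq> {1..n} \<and> FQ_legal S \<and> sum quilt S = x)"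
proof -
  have "(\<Sum>i\<in>S. map quilt [1..<Suc n] ! (i - 1)) = sum quilt S" if "S \<subseteq> {1..n}" for S
    using that by (intro sum.cong refl nth_map_quilt_upt) auto
  then show ?thesis unfolding has_FQ_legal_def by (auto simp del: upt_Suc)
qed

lemma FQ_prefix_eq: "FQ_prefix n = map quilt [1..<Suc n]"
proof (induction n)
  case (Suc n)
  have "(LEAST x. 0 < x \<and> \<not> has_FQ_legal (map quilt [1..<Suc n]) x) = quilt (Suc n)"
  proof (rule Least_equality)
    show "0 < quilt (Suc n) \<and> \<not> has_FQ_legal (map quilt [1..<Suc n]) (quilt (Suc n))"
      unfolding has_FQ_legal_quilt_iff using quilt_pos[of "Suc n"] quilt_Suc_ne_legal_sum by auto
  next
    fix y assume "0 < y \<and> \<not> has_FQ_legal (map quilt [1..<Suc n]) y"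
    then show "quilt (Suc n) \<le> y"
      unfolding has_FQ_legal_quilt_iff using ex_legal_sum_eq[of y n] by (meson not_le)
  qed
  then show ?case using Suc by simp
qed simp

lemma fq_eq_quilt: "1 \<le> i \<Longrightarrow> fq i = quilt i"
  unfolding fq_def FQ_prefix_eq by (simp add: nth_map_quilt_upt del: upt_Suc)

lemma all_less_numeral: "(\<forall>i<numeral n. P i) \<longleftrightarrow> P (pred_numeral n) \<and> (\<forall>i<pred_numeral n. P i)"
  by (simp add: numeral_eq_Suc All_less_Suc)

lemma ex_less_numeral: "(\<exists>i<numeral n. P i) \<longleftrightarrow> P (pred_numeral n) \<or> (\<exists>i<pred_numeral n. P i)"
  by (simp add: numeral_eq_Suc Ex_less_Suc)

lemma quilt_pair_exchange:
  assumes "1 \<le> j" and "j \<le> k" and "k \<le> j + 4" and "\<not> (k = 5 \<and> j = 1)"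
  shows "\<exists>a b. k < a \<and> quilt k + quilt j = quilt a + quilt b"
proof (cases "k < 10")
  case True
  have "\<forall>k<10. \<forall>j<10. 1 \<le> j \<longrightarrow> j \<le> k \<longrightarrow> k \<le> j + 4 \<longrightarrow> \<not> (k = 5 \<and> j = 1) \<longrightarrow>
          (\<exists>a<12. \<exists>b<7. k < a \<and> quilt k + quilt j = quilt a + quilt b)"
    by (simp add: all_less_numeral ex_less_numeral)
  from this[rule_format, of k j] assms True show ?thesis by auto
next
  case False
  then obtain t where k: "k = t + 10" by (intro that[of "k - 10"]) simp
  have r: "quilt (t + 12) = quilt (t + 10) + quilt (t + 9)"
    "quilt (t + 10) = quilt (t + 9) + quilt (t + 5)"
    "quilt (t + 11) = quilt (t + 10) + quilt (t + 6)"
    "quilt (t + 8) = quilt (t + 6) + quilt (t + 5)"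
    "quilt (t + 7) = quilt (t + 6) + quilt (t + 2)"
    using quilt_add5[of "t + 7"] quilt_add7[of "t + 3"] quilt_add7[of "t + 4"]
      quilt_add5[of "t + 3"] quilt_add7[of t]
    by (simp_all add: ac_simps)
  consider "j = t + 10" | "j = t + 9" | "j = t + 8" | "j = t + 7" | "j = t + 6"
    using assms k by linarith
  then show ?thesis
  proof cases
    case 1
    then show ?thesis using k r(1,2) by (intro exI[of _ "t + 12"] exI[of _ "t + 5"]) simp
  next
    case 2
    then show ?thesis using k r(1) by (intro exI[of _ "t + 12"] exI[of _ 0]) simp
  next
    case 3
    then show ?thesis using k r(3,4) by (intro exI[of _ "t + 11"] exI[of _ "t + 5"]) simp
  next
    case 4
    then show ?thesis using k r(3,5) by (intro exI[of _ "t + 11"] exI[of _ "t + 2"]) simp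
  next
    case 5
    then show ?thesis using k r(3) by (intro exI[of _ "t + 11"] exI[of _ 0]) simp
  qed
qed

text \<open>
  A decomposition is a multiset of indices. The exchanges below may produce the index 0, a part of
  value q_0 = 0 which only makes the count of summands larger, so the bounds remain valid.
\<close>

abbreviation quilt_msum :: "nat multiset \<Rightarrow> nat" where
  "quilt_msum D \<equiv> \<Sum>i\<in>#D. quilt i"

lemma ex_nonzero_part: "quilt_msum D \<noteq> 0 \<Longrightarrow> \<exists>i\<in>#D. i \<noteq> 0"
  by (induction D) auto

lemma mset_exchange_pair:
  assumes "j \<in># G" and "1 \<le> j" and "j \<le> k" and "k \<le> j + 4" and "\<not> (k = 5 \<and> j = 1)"
  shows "\<exists>D. quilt_msum D = quilt k + quilt_msum G \<and> size D \<le> Suc (size G) \<and> (\<exists>i\<in>#D. k < i)"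
proof -
  obtain a b where ab: "k < a" "quilt k + quilt j = quilt a + quilt b"
    using quilt_pair_exchange assms(2-5) by blast
  obtain H where H: "G = add_mset j H" using assms(1) by (metis multi_member_split)
  show ?thesis
    using ab H by (intro exI[of _ "add_mset a (add_mset b H)"]) auto
qed

text \<open>The induction step of \<open>ex_part_above\<close> when k is a part; \<open>IH\<close> is the hypothesis at k - 5.\<close>

lemma ex_part_above_step:
  assumes IH: "\<And>F. 6 \<le> k \<Longrightarrow> \<forall>i\<in>#F. i \<le> k - 5 \<Longrightarrow> quilt (k - 4) \<le> quilt_msum F \<Longrightarrow>
      \<exists>F'. quilt_msum F' = quilt_msum F \<and> size F' \<le> size F \<and> (\<exists>i\<in>#F'. k - 5 < i)"
    and E: "\<forall>i\<in>#E. i \<le> k" "k \<in># E" "quilt (Suc k) \<le> quilt_msum E"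
  shows "\<exists>D. quilt_msum D = quilt_msum E \<and> size D \<le> size E \<and> (\<exists>i\<in>#D. k < i)"
proof -
  obtain F where F: "E = add_mset k F" using E(2) by (metis multi_member_split)
  have F_le: "\<forall>i\<in>#F. i \<le> k" using E(1) F by auto
  have sum_F: "quilt (Suc k) \<le> quilt k + quilt_msum F" using E(3) F by simp
  then have "quilt_msum F \<noteq> 0" by (intro notI) simp
  then obtain i1 where i1: "i1 \<in># F" "i1 \<noteq> 0" using ex_nonzero_part by blast
  consider (pair) j where "j \<in># F" "1 \<le> j" "k \<le> j + 4" "\<not> (k = 5 \<and> j = 1)"
    | (five) "k = 5" "\<forall>i\<in>#F. 1 \<le> i \<longrightarrow> i = 1"
    | (far) "k \<noteq> 5" "\<forall>i\<in>#F. 1 \<le> i \<longrightarrow> i + 4 < k"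
    by (cases "k = 5") (auto simp: not_le[symmetric])
  then show ?thesis
  proof cases
    case pair
    then show ?thesis using mset_exchange_pair[of j F k] F_le F by auto
  next
    case five
    txt \<open>The exchange fails for 5 + 1 = 6, but q_5 + q_1 + q_1 = q_6.\<close>
    have "1 \<in># F" using i1 five by auto
    then obtain F1 where F1: "F = add_mset 1 F1" by (metis multi_member_split)
    have "quilt_msum F1 \<noteq> 0" using sum_F five F1 by (intro notI) simp
    then obtain i2 where "i2 \<in># F1" "i2 \<noteq> 0" using ex_nonzero_part by blast
    then have "1 \<in># F1" using five F1 by auto
    then obtain F2 where F2: "F1 = add_mset 1 F2" by (metis multi_member_split)
    show ?thesis
      using F F1 F2 five by (intro exI[of _ "add_mset 6 F2"]) auto
  next
    case far
    have "6 \<le> k" using far(2) i1 by fastforce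
    have F_le': "\<forall>i\<in>#F. i \<le> k - 5" using far(2) \<open>6 \<le> k\<close> by fastforce
    have "quilt (Suc k) = quilt k + quilt (k - 4)"
      using quilt_add7[of "k - 6"] \<open>6 \<le> k\<close> by (simp add: ac_simps)
    then have "quilt (k - 4) \<le> quilt_msum F" using sum_F by simp
    then obtain F' where F': "quilt_msum F' = quilt_msum F" "size F' \<le> size F" "\<exists>i\<in>#F'. k - 5 < i"
      using IH \<open>6 \<le> k\<close> F_le' by blast
    show ?thesis
    proof (cases "\<exists>i\<in>#F'. k < i")
      case True
      then show ?thesis using F F' by (intro exI[of _ "add_mset k F'"]) auto
    next
      case False
      with F'(3) obtain j where j: "j \<in># F'" "k - 5 < j" "j \<le> k" by auto
      then have "1 \<le> j" "k \<le> j + 4" using \<open>6 \<le> k\<close> by auto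
      with j obtain D where "quilt_msum D = quilt k + quilt_msum F'" "size D \<le> Suc (size F')"
          "\<exists>i\<in>#D. k < i"
        using mset_exchange_pair[of j F' k] far(1) by blast
      then show ?thesis using F F' by (intro exI[of _ D]) auto
    qed
  qed
qed

lemma ex_part_above:
  assumes "\<forall>i\<in>#D. i \<le> k" and "quilt (Suc k) \<le> quilt_msum D"
  shows "\<exists>D'. quilt_msum D' = quilt_msum D \<and> size D' \<le> size D \<and> (\<exists>i\<in>#D'. k < i)"
  using assms
proof (induction k arbitrary: D rule: less_induct)
  case (less k)
  have IH: "\<exists>F'. quilt_msum F' = quilt_msum F \<and> size F' \<le> size F \<and> (\<exists>i\<in>#F'. k - 5 < i)"
    if "6 \<le> k" "\<forall>i\<in>#F. i \<le> k - 5" "quilt (k - 4) \<le> quilt_msum F" for F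
  proof -
    have "Suc (k - 5) = k - 4" using that(1) by simp
    then show ?thesis using less.IH[of "k - 5" F] that by simp
  qed
  have with_top: "\<exists>D'. quilt_msum D' = quilt_msum E \<and> size D' \<le> size E \<and> (\<exists>i\<in>#D'. k < i)"
    if "\<forall>i\<in>#E. i \<le> k" "k \<in># E" "quilt (Suc k) \<le> quilt_msum E" for E
    using ex_part_above_step[OF IH that] .
  show ?case
  proof (cases "k \<in># D")
    case True
    then show ?thesis using with_top less.prems by blast
  next
    case False
    have "quilt_msum D \<noteq> 0" using less.prems(2) quilt_pos[of "Suc k"] by (intro notI) simp
    then obtain i where "i \<in># D" "i \<noteq> 0" using ex_nonzero_part by blast
    then have "k \<noteq> 0" using less.prems(1) by auto
    have "\<forall>i\<in>#D. i \<le> k - 1" using less.prems(1) False by (auto simp: le_less)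
    moreover have "quilt k \<le> quilt_msum D" using less.prems(2) quilt_less_Suc[of k] by linarith
    then have "quilt (Suc (k - 1)) \<le> quilt_msum D" using \<open>k \<noteq> 0\<close> by simp
    ultimately obtain D1 where D1: "quilt_msum D1 = quilt_msum D" "size D1 \<le> size D"
      "\<exists>i\<in>#D1. k - 1 < i"
      using less.IH[of "k - 1" D] \<open>k \<noteq> 0\<close> by auto
    show ?thesis
    proof (cases "\<exists>i\<in>#D1. k < i")
      case True
      then show ?thesis using D1 by blast
    next
      case False
      then have le_k: "\<forall>i\<in>#D1. i \<le> k" by (auto simp: not_less)
      from D1(3) obtain i where i: "i \<in># D1" "k - 1 < i" by blast
      with le_k have "i = k" by fastforce
      with i(1) have "k \<in># D1" by simp
      with le_k show ?thesis using with_top[of D1] D1 less.prems(2) by auto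
    qed
  qed
qed

lemma part_le_of_quilt_msum_less:
  assumes "i \<in># D" and "quilt_msum D < quilt (Suc l)"
  shows "i \<le> l"
proof -
  obtain D' where "D = add_mset i D'" using assms(1) by (metis multi_member_split)
  then have "quilt i \<le> quilt_msum D" by simp
  then have "quilt i < quilt (Suc l)" using assms(2) by linarith
  then show ?thesis by simp
qed

lemma ex_mset_with_greedy_part:
  assumes "1 \<le> l" and "quilt l \<le> quilt_msum D" and "quilt_msum D < quilt (Suc l)"
  shows "\<exists>D'. quilt_msum D' = quilt_msum D \<and> size D' \<le> size D \<and> l \<in># D'"
proof (cases "l \<in># D")
  case False
  have "\<forall>i\<in>#D. i \<le> l - 1"
  proof
    fix i assume "i \<in># D"
    then have "i \<le> l" "i \<noteq> l" using part_le_of_quilt_msum_less assms(3) False by auto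
    then show "i \<le> l - 1" by simp
  qed
  moreover have "quilt (Suc (l - 1)) \<le> quilt_msum D" using assms(1,2) by simp
  ultimately obtain D' where D': "quilt_msum D' = quilt_msum D" "size D' \<le> size D"
    "\<exists>i\<in>#D'. l - 1 < i"
    using ex_part_above[of D "l - 1"] by auto
  then obtain i where "i \<in># D'" "l - 1 < i" by blast
  moreover have "i \<le> l" using part_le_of_quilt_msum_less[OF \<open>i \<in># D'\<close>] D'(1) assms(3) by simp
  ultimately have "i = l" by simp
  with \<open>i \<in># D'\<close> have "l \<in># D'" by simp
  then show ?thesis using D' by blast
qed blast

lemma quilt_ne_6: "quilt a \<noteq> 6"
proof (cases "a \<le> 5")
  case False
  then have "quilt 6 \<le> quilt a" by (simp del: quilt_values)
  then show ?thesis by simp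
qed (simp add: quilt_small)

lemma greedy6_length_le:
  assumes "greedy6 m L" and "quilt_msum D = m"
  shows "length L \<le> size D"
  using assms
proof (induction arbitrary: D rule: greedy6.induct)
  case (is_term n)
  then have "D \<noteq> {#}" using quilt_pos[of n] fq_eq_quilt[of n] by auto
  then show ?case by (simp add: Suc_le_eq nonempty_has_size)
next
  case six
  have "D \<noteq> {#}" using six by auto
  then obtain a D1 where D: "D = add_mset a D1" by (metis multiset_cases)
  have "D1 \<noteq> {#}" using six quilt_ne_6[of a] D by auto
  then show ?case using D by (simp add: Suc_le_eq nonempty_has_size)
next
  case (step m l L)
  have "quilt l \<le> quilt_msum D" "quilt_msum D < quilt (Suc l)"
    using step.hyps(3-5) step.prems fq_eq_quilt[of l] fq_eq_quilt[of "l + 1"] by auto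
  then obtain D' where D': "quilt_msum D' = m" "size D' \<le> size D" "l \<in># D'"
    using ex_mset_with_greedy_part[OF step.hyps(3)] step.prems by blast
  then obtain D'' where D'': "D' = add_mset l D''" by (metis multi_member_split)
  then have "quilt_msum D'' = m - fq l" using D'(1) fq_eq_quilt[OF step.hyps(3)] by simp
  then have "length L \<le> size D''" by (rule step.IH)
  then show ?case using D'(2) D'' by simp
qed

lemma greedy6_exists: "0 < m \<Longrightarrow> \<exists>L. greedy6 m L"
proof (induction m rule: less_induct)
  case (less m)
  show ?case
  proof (cases "(\<exists>n\<ge>1. m = fq n) \<or> m = 6")
    case True
    then show ?thesis using greedy6.is_term greedy6.six by blast
  next
    case False
    have "1 \<le> m" using less.prems by simp
    then obtain l where l: "1 \<le> l" "quilt l \<le> m" "m < quilt (Suc l)" by (rule quilt_bracket)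
    have "m \<noteq> quilt l" using False l(1) fq_eq_quilt[of l] by auto
    then have "quilt l < m" using l(2) by simp
    moreover obtain L where "greedy6 (m - quilt l) L"
      using less.IH[of "m - quilt l"] quilt_pos[OF l(1)] calculation by auto
    ultimately have "greedy6 m (fq l # L)"
      using greedy6.step[of m l L] False l fq_eq_quilt[of l] fq_eq_quilt[of "l + 1"] by auto
    then show ?thesis by blast
  qed
qed

theorem mainTheorem18:
  fixes m n :: nat and c :: "nat \<Rightarrow> nat"
  assumes "m > 0"
    and "m = (\<Sum>i = 1..n. c i * fq i)"
  shows "(\<exists>L. greedy6 m L) \<and> (\<forall>L. greedy6 m L \<longrightarrow> length L \<le> (\<Sum>i = 1..n. c i))"
proof (intro conjI allI impI)
  show "\<exists>L. greedy6 m L" using greedy6_exists assms(1) by blast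
next
  fix L assume "greedy6 m L"
  define D where "D = (\<Sum>i\<in>{1..n}. replicate_mset (c i) i)"
  have "quilt_msum D = (\<Sum>i = 1..n. quilt_msum (replicate_mset (c i) i))"
    unfolding D_def by (rule sum_comp_morphism[symmetric, unfolded o_def]) simp_all
  also have "\<dots> = m" unfolding assms(2) by (intro sum.cong refl) (simp add: fq_eq_quilt)
  finally have "length L \<le> size D" by (rule greedy6_length_le[OF \<open>greedy6 m L\<close>])
  then show "length L \<le> (\<Sum>i = 1..n. c i)" by (simp add: D_def)
qed

end
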